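(* Let $E$ be a complete separable metric space, and let $\{X_n, n\ge1\}$ and $\{Y_n, n\ge0\}$ be $E$-valued random elements, where the $Y_n$ ($n\ge 0$) are defined on a common probability space. Assume: (1) $Y_n\to Y_0$ in probability as $n\to\infty$; (2) for each $n\ge1$ the law $P_{X_n}$ of $X_n$ is absolutely continuous with respect to the law $P_{Y_n}$ of $Y_n$, with Radon–Nikodym density $\rho_n=\frac{dP_{X_n}}{dP_{Y_n}}:E\to[0,\infty)$; (3) $\rho_n(Y_n)\to p$ in probability for some random variable $p$; (4) $\mathbb{E}p=1$. Then $P_{X_n}$ converges weakly as $n\to\infty$ to the probability measure $\mathbb{E}(p\mid Y_0=y)\,P_{Y_0}(dy)$ on $E$. *)

theory Defs
  imports "HOL-Probability.Probability"
begin

definition conv_in_prob :: "'b measure \<Rightarrow> (nat \<Rightarrow> 'b \<Rightarrow> 'a::metric_space) \<Rightarrow> ('b \<Rightarrow> 'a) \<Rightarrow> bool" where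
  "conv_in_prob M Z Z0 \<longleftrightarrow>
     (\<forall>e>0. (\<lambda>n. measure M {\<omega> \<in> space M. dist (Z n \<omega>) (Z0 \<omega>) > e}) \<longlonglongrightarrow> 0)"

definition weak_conv_measures :: "(nat \<Rightarrow> 'a::metric_space measure) \<Rightarrow> 'a measure \<Rightarrow> bool" where
  "weak_conv_measures \<mu> \<nu> \<longleftrightarrow>
     (\<forall>f :: 'a \<Rightarrow> real. continuous_on UNIV f \<and> bounded (range f) \<longrightarrow>
        (\<lambda>n. integral\<^sup>L (\<mu> n) f) \<longlonglongrightarrow> integral\<^sup>L \<nu> f)"

end

theory Submission imports Defs begin

text \<open>
  Every subsequence of the indices has a further subsequence along which, by Riesz's theorem,
  \<open>Y\<^sub>n \<rightarrow> Y\<^sub>0\<close> and \<open>\<rho>\<^sub>n(Y\<^sub>n) \<rightarrow> p\<close> almost surely. Since \<open>\<rho>\<^sub>n(Y\<^sub>n) \<ge> 0\<close> and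
  \<open>E \<rho>\<^sub>n(Y\<^sub>n) = 1 = E p\<close>, Scheff\'e's lemma upgrades the second convergence to \<open>L\<^sup>1\<close>, so
  for bounded continuous \<open>f\<close>
  \<open>\<integral> f dP\<^sub>X\<^sub>n = E[\<rho>\<^sub>n(Y\<^sub>n) f(Y\<^sub>n)] \<rightarrow> E[p f(Y\<^sub>0)] = E[E(p | Y\<^sub>0) f(Y\<^sub>0)]\<close>.
  A real sequence all of whose subsequences have such convergent sub-subsequences converges.
\<close>

lemma LIMSEQ_subsubseq:
  fixes a :: "nat \<Rightarrow> 'a::metric_space"
  assumes "\<And>r::nat \<Rightarrow> nat. strict_mono r \<Longrightarrow> \<exists>s::nat \<Rightarrow> nat. strict_mono s \<and> (\<lambda>n. a (r (s n))) \<longlonglongrightarrow> L"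
  shows "a \<longlonglongrightarrow> L"
proof (rule ccontr)
  assume "\<not> a \<longlonglongrightarrow> L"
  then obtain e where "e > 0" and far: "\<And>N. \<exists>n\<ge>N. dist (a n) L \<ge> e"
    unfolding LIMSEQ_def by (auto simp: not_less)
  define S where "S = {n. dist (a n) L \<ge> e}"
  have "infinite S"
    unfolding S_def infinite_nat_iff_unbounded_le using far by auto
  define r where "r = enumerate S"
  have "strict_mono r" and r_in_S: "\<And>n. r n \<in> S"
    unfolding r_def using strict_mono_enumerate enumerate_in_set \<open>infinite S\<close> by auto
  obtain s where "(\<lambda>n. a (r (s n))) \<longlonglongrightarrow> L"
    using assms[OF \<open>strict_mono r\<close>] by blast
  then obtain n where "dist (a (r (s n))) L < e"
    using \<open>e > 0\<close> unfolding LIMSEQ_def by blast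
  with r_in_S[of "s n"] show False
    by (simp add: S_def)
qed

lemma conv_in_prob_subseq:
  assumes "conv_in_prob M Z Z0" "strict_mono r"
  shows "conv_in_prob M (\<lambda>n. Z (r n)) Z0"
  using assms LIMSEQ_subseq_LIMSEQ unfolding conv_in_prob_def o_def by fastforce

text \<open>Riesz's theorem: the subsequence makes the probabilities of deviating by more than
  \<open>2\<^sup>-\<^sup>k\<close> summable, and Borel--Cantelli applies.\<close>

lemma conv_in_prob_AE_subseq:
  fixes Z :: "nat \<Rightarrow> 'b \<Rightarrow> 'a::{metric_space, second_countable_topology}"
  assumes "finite_measure M"
    and [measurable]: "\<And>n. Z n \<in> borel_measurable M" "Z0 \<in> borel_measurable M"
    and conv: "conv_in_prob M Z Z0"
  obtains r where "strict_mono r" "AE \<omega> in M. (\<lambda>n. Z (r n) \<omega>) \<longlonglongrightarrow> Z0 \<omega>"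
proof -
  interpret finite_measure M by fact
  define A where "A k m = {\<omega>\<in>space M. dist (Z m \<omega>) (Z0 \<omega>) > (1/2::real)^k}" for k m
  have A_sets [measurable]: "A k m \<in> sets M" for k m
    unfolding A_def by measurable
  have "\<exists>N. \<forall>m\<ge>N. measure M (A k m) < (1/2)^k" for k
    using order_tendstoD(2)[OF conv[unfolded conv_in_prob_def, rule_format, of "(1/2)^k"]]
    by (simp add: A_def eventually_sequentially)
  then obtain N where N: "\<And>k m. m \<ge> N k \<Longrightarrow> measure M (A k m) < (1/2)^k"
    by metis
  define r where "r = rec_nat (N 0) (\<lambda>k rk. max (Suc rk) (N (Suc k)))"
  have r_ge_N: "r k \<ge> N k" for k
    by (cases k) (simp_all add: r_def)
  have "strict_mono r"
    by (rule strict_monoI_Suc) (simp add: r_def)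
  have summable_A: "summable (\<lambda>k. measure M (A k (r k)))"
    by (rule summable_comparison_test'[OF summable_geometric[of "1/2::real"]])
       (use N[OF r_ge_N] in \<open>auto simp: less_imp_le\<close>)
  have "AE \<omega> in M. eventually (\<lambda>k. \<omega> \<in> space M - A k (r k)) sequentially"
    by (rule borel_cantelli_AE1[OF A_sets _ summable_A]) (simp add: less_top[symmetric] emeasure_finite)
  then have "AE \<omega> in M. (\<lambda>k. Z (r k) \<omega>) \<longlonglongrightarrow> Z0 \<omega>"
  proof eventually_elim
    case (elim \<omega>)
    have close: "eventually (\<lambda>k. dist (Z (r k) \<omega>) (Z0 \<omega>) \<le> (1/2)^k) sequentially"
      using elim by eventually_elim (auto simp: A_def not_less)
    have "(\<lambda>k. dist (Z (r k) \<omega>) (Z0 \<omega>)) \<longlonglongrightarrow> 0"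
    proof (rule tendsto_sandwich[of "\<lambda>_. 0" _ _ "\<lambda>k. (1/2::real)^k"])
      show "(\<lambda>k. (1/2::real)^k) \<longlonglongrightarrow> 0"
        by (rule LIMSEQ_power_zero) simp
    qed (use close in simp_all)
    then show ?case
      using tendsto_dist_iff by blast
  qed
  with \<open>strict_mono r\<close> show thesis
    by (rule that)
qed

lemma conv_in_prob_nonneg_limit:
  fixes Z :: "nat \<Rightarrow> 'b \<Rightarrow> real"
  assumes "finite_measure M"
    and "\<And>n. Z n \<in> borel_measurable M" "p \<in> borel_measurable M"
    and "\<And>n \<omega>. Z n \<omega> \<ge> 0" "conv_in_prob M Z p"
  shows "AE \<omega> in M. p \<omega> \<ge> 0"
proof -
  obtain r where "AE \<omega> in M. (\<lambda>n. Z (r n) \<omega>) \<longlonglongrightarrow> p \<omega>"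
    using conv_in_prob_AE_subseq[OF assms(1-3,5)] by blast
  then show ?thesis
  proof eventually_elim
    case (elim \<omega>)
    show ?case
      by (rule LIMSEQ_le_const[OF elim]) (use assms(4) in blast)
  qed
qed

lemma integrable_mult_bounded:
  fixes u h :: "'b \<Rightarrow> real"
  assumes "integrable M u" "h \<in> borel_measurable M" "\<And>\<omega>. \<bar>h \<omega>\<bar> \<le> B"
  shows "integrable M (\<lambda>\<omega>. u \<omega> * h \<omega>)"
proof (rule Bochner_Integration.integrable_bound[where f="\<lambda>\<omega>. B * u \<omega>"])
  have "B \<ge> 0"
    using assms(3) abs_ge_zero order_trans by blast
  show "AE \<omega> in M. norm (u \<omega> * h \<omega>) \<le> norm (B * u \<omega>)"
  proof (rule AE_I2)
    fix \<omega>
    have "\<bar>h \<omega>\<bar> * \<bar>u \<omega>\<bar> \<le> B * \<bar>u \<omega>\<bar>"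
      by (rule mult_right_mono[OF assms(3) abs_ge_zero])
    then show "norm (u \<omega> * h \<omega>) \<le> norm (B * u \<omega>)"
      using \<open>B \<ge> 0\<close> by (simp add: abs_mult mult.commute)
  qed
qed (use assms in auto)

text \<open>Scheff\'e's lemma, via \<open>\<bar>w - p\<bar> = w + p - 2 min w p\<close> and dominated convergence for
  \<open>min w p\<close>.\<close>

lemma Scheffe_L1:
  fixes W :: "nat \<Rightarrow> 'b \<Rightarrow> real"
  assumes W_int: "\<And>n. integrable M (W n)" and p_int: "integrable M p"
    and W_nonneg: "\<And>n. AE \<omega> in M. W n \<omega> \<ge> 0"
    and W_integral: "\<And>n. integral\<^sup>L M (W n) = integral\<^sup>L M p"
    and W_lim: "AE \<omega> in M. (\<lambda>n. W n \<omega>) \<longlonglongrightarrow> p \<omega>"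
  shows "(\<lambda>n. \<integral>\<omega>. \<bar>W n \<omega> - p \<omega>\<bar> \<partial>M) \<longlonglongrightarrow> 0"
proof -
  have min_int: "integrable M (\<lambda>\<omega>. min (W n \<omega>) (p \<omega>))" for n
    using W_int p_int by (rule integrable_min)
  have abs_diff: "(\<integral>\<omega>. \<bar>W n \<omega> - p \<omega>\<bar> \<partial>M) = 2 * (integral\<^sup>L M p - (\<integral>\<omega>. min (W n \<omega>) (p \<omega>) \<partial>M))"
    for n
  proof -
    have "(\<integral>\<omega>. \<bar>W n \<omega> - p \<omega>\<bar> \<partial>M) = (\<integral>\<omega>. W n \<omega> + p \<omega> - 2 * min (W n \<omega>) (p \<omega>) \<partial>M)"
      by (rule Bochner_Integration.integral_cong) (auto simp: min_def)
    also have "\<dots> = integral\<^sup>L M (W n) + integral\<^sup>L M p - 2 * (\<integral>\<omega>. min (W n \<omega>) (p \<omega>) \<partial>M)"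
      using W_int[of n] p_int min_int[of n] by simp
    finally show ?thesis
      using W_integral[of n] by simp
  qed
  have "(\<lambda>n. \<integral>\<omega>. min (W n \<omega>) (p \<omega>) \<partial>M) \<longlonglongrightarrow> integral\<^sup>L M p"
  proof (rule integral_dominated_convergence[where w="\<lambda>\<omega>. \<bar>p \<omega>\<bar>"])
    show "AE \<omega> in M. (\<lambda>n. min (W n \<omega>) (p \<omega>)) \<longlonglongrightarrow> p \<omega>"
      using W_lim
    proof eventually_elim
      case (elim \<omega>)
      show ?case
        using tendsto_min[OF elim tendsto_const[of "p \<omega>"]] by simp
    qed
    show "AE \<omega> in M. norm (min (W n \<omega>) (p \<omega>)) \<le> \<bar>p \<omega>\<bar>" for n
      using W_nonneg[of n] by eventually_elim (auto simp: min_def)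
  qed (use W_int p_int in auto)
  then have "(\<lambda>n. 2 * (integral\<^sup>L M p - (\<integral>\<omega>. min (W n \<omega>) (p \<omega>) \<partial>M))) \<longlonglongrightarrow> 2 * (integral\<^sup>L M p - integral\<^sup>L M p)"
    by (intro tendsto_intros)
  then show ?thesis
    unfolding abs_diff by simp
qed

lemma integral_tendsto_of_L1_and_AE:
  fixes W :: "nat \<Rightarrow> 'b \<Rightarrow> real" and V :: "nat \<Rightarrow> 'b \<Rightarrow> 'a::topological_space"
  assumes W_int: "\<And>n. integrable M (W n)" and p_int: "integrable M p"
    and W_L1: "(\<lambda>n. \<integral>\<omega>. \<bar>W n \<omega> - p \<omega>\<bar> \<partial>M) \<longlonglongrightarrow> 0"
    and [measurable]: "\<And>n. V n \<in> borel_measurable M" "V0 \<in> borel_measurable M"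
    and V_lim: "AE \<omega> in M. (\<lambda>n. V n \<omega>) \<longlonglongrightarrow> V0 \<omega>"
    and f_cont: "continuous_on UNIV f" and f_bound: "\<And>x. \<bar>f x\<bar> \<le> B"
  shows "(\<lambda>n. \<integral>\<omega>. W n \<omega> * f (V n \<omega>) \<partial>M) \<longlonglongrightarrow> (\<integral>\<omega>. p \<omega> * f (V0 \<omega>) \<partial>M)"
proof -
  have [measurable]: "f \<in> borel_measurable borel"
    using f_cont by (rule borel_measurable_continuous_onI)
  have [measurable]: "p \<in> borel_measurable M" "W n \<in> borel_measurable M" for n
    using W_int p_int by auto
  have int_bounded: "integrable M (\<lambda>\<omega>. u \<omega> * f (V n \<omega>))" if "integrable M u" for u n
    by (rule integrable_mult_bounded[OF that _ f_bound]) measurable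
  have diff_bound: "\<bar>(\<integral>\<omega>. W n \<omega> * f (V n \<omega>) \<partial>M) - (\<integral>\<omega>. p \<omega> * f (V n \<omega>) \<partial>M)\<bar>
      \<le> B * (\<integral>\<omega>. \<bar>W n \<omega> - p \<omega>\<bar> \<partial>M)" for n
  proof -
    have W_p_int: "integrable M (\<lambda>\<omega>. W n \<omega> - p \<omega>)"
      using W_int p_int by (rule Bochner_Integration.integrable_diff)
    have "(\<integral>\<omega>. W n \<omega> * f (V n \<omega>) \<partial>M) - (\<integral>\<omega>. p \<omega> * f (V n \<omega>) \<partial>M)
        = (\<integral>\<omega>. W n \<omega> * f (V n \<omega>) - p \<omega> * f (V n \<omega>) \<partial>M)"
      by (rule Bochner_Integration.integral_diff[symmetric, OF int_bounded[OF W_int] int_bounded[OF p_int]])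
    also have "\<dots> = (\<integral>\<omega>. (W n \<omega> - p \<omega>) * f (V n \<omega>) \<partial>M)"
      by (simp only: left_diff_distrib)
    finally have diff: "(\<integral>\<omega>. W n \<omega> * f (V n \<omega>) \<partial>M) - (\<integral>\<omega>. p \<omega> * f (V n \<omega>) \<partial>M)
        = (\<integral>\<omega>. (W n \<omega> - p \<omega>) * f (V n \<omega>) \<partial>M)" .
    have "\<bar>\<integral>\<omega>. (W n \<omega> - p \<omega>) * f (V n \<omega>) \<partial>M\<bar> \<le> (\<integral>\<omega>. \<bar>(W n \<omega> - p \<omega>) * f (V n \<omega>)\<bar> \<partial>M)"
      using integral_norm_bound[of M "\<lambda>\<omega>. (W n \<omega> - p \<omega>) * f (V n \<omega>)"] by (simp only: real_norm_def)
    also have "\<dots> \<le> (\<integral>\<omega>. B * \<bar>W n \<omega> - p \<omega>\<bar> \<partial>M)"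
    proof (rule integral_mono)
      show "integrable M (\<lambda>\<omega>. \<bar>(W n \<omega> - p \<omega>) * f (V n \<omega>)\<bar>)"
        using int_bounded[OF W_p_int] by (rule integrable_abs)
      show "integrable M (\<lambda>\<omega>. B * \<bar>W n \<omega> - p \<omega>\<bar>)"
        using integrable_abs[OF W_p_int] by (rule integrable_mult_right)
      show "\<bar>(W n \<omega> - p \<omega>) * f (V n \<omega>)\<bar> \<le> B * \<bar>W n \<omega> - p \<omega>\<bar>" for \<omega>
        using mult_left_mono[OF f_bound[of "V n \<omega>"] abs_ge_zero[of "W n \<omega> - p \<omega>"]]
        by (simp add: abs_mult mult.commute)
    qed
    also have "\<dots> = B * (\<integral>\<omega>. \<bar>W n \<omega> - p \<omega>\<bar> \<partial>M)"
      by (rule integral_mult_right_zero)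
    finally show ?thesis
      unfolding diff .
  qed
  have diff_lim: "(\<lambda>n. (\<integral>\<omega>. W n \<omega> * f (V n \<omega>) \<partial>M) - (\<integral>\<omega>. p \<omega> * f (V n \<omega>) \<partial>M)) \<longlonglongrightarrow> 0"
  proof (rule Lim_null_comparison[where g="\<lambda>n. B * (\<integral>\<omega>. \<bar>W n \<omega> - p \<omega>\<bar> \<partial>M)"])
    show "\<forall>\<^sub>F n in sequentially. norm ((\<integral>\<omega>. W n \<omega> * f (V n \<omega>) \<partial>M) - (\<integral>\<omega>. p \<omega> * f (V n \<omega>) \<partial>M))
        \<le> B * (\<integral>\<omega>. \<bar>W n \<omega> - p \<omega>\<bar> \<partial>M)"
      using diff_bound by (simp add: always_eventually)
    show "(\<lambda>n. B * (\<integral>\<omega>. \<bar>W n \<omega> - p \<omega>\<bar> \<partial>M)) \<longlonglongrightarrow> 0"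
      by (rule tendsto_mult_right_zero[OF W_L1])
  qed
  have p_lim: "(\<lambda>n. \<integral>\<omega>. p \<omega> * f (V n \<omega>) \<partial>M) \<longlonglongrightarrow> (\<integral>\<omega>. p \<omega> * f (V0 \<omega>) \<partial>M)"
  proof (rule integral_dominated_convergence[where w="\<lambda>\<omega>. B * \<bar>p \<omega>\<bar>"])
    show "AE \<omega> in M. (\<lambda>n. p \<omega> * f (V n \<omega>)) \<longlonglongrightarrow> p \<omega> * f (V0 \<omega>)"
      using V_lim
    proof eventually_elim
      case (elim \<omega>)
      show ?case
        using continuous_on_tendsto_compose[OF f_cont elim] by (intro tendsto_mult tendsto_const) auto
    qed
    show "AE \<omega> in M. norm (p \<omega> * f (V n \<omega>)) \<le> B * \<bar>p \<omega>\<bar>" for n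
    proof (rule AE_I2)
      fix \<omega>
      show "norm (p \<omega> * f (V n \<omega>)) \<le> B * \<bar>p \<omega>\<bar>"
        using mult_right_mono[OF f_bound[of "V n \<omega>"] abs_ge_zero[of "p \<omega>"]]
        by (simp add: abs_mult mult.commute)
    qed
  qed (use p_int in simp_all)
  show ?thesis
    by (rule Lim_transform[OF p_lim diff_lim])
qed

lemma integral_tendsto_of_conv_in_prob:
  fixes W :: "nat \<Rightarrow> 'b \<Rightarrow> real" and V :: "nat \<Rightarrow> 'b \<Rightarrow> 'a::{metric_space, second_countable_topology}"
  assumes "finite_measure M"
    and W_int: "\<And>n. integrable M (W n)" and p_int: "integrable M p"
    and W_nonneg: "\<And>n \<omega>. W n \<omega> \<ge> 0"
    and W_integral: "\<And>n. integral\<^sup>L M (W n) = integral\<^sup>L M p"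
    and W_conv: "conv_in_prob M W p"
    and [measurable]: "\<And>n. V n \<in> borel_measurable M" "V0 \<in> borel_measurable M"
    and V_conv: "conv_in_prob M V V0"
    and f_cont: "continuous_on UNIV f" and f_bound: "\<And>x. \<bar>f x\<bar> \<le> B"
  shows "(\<lambda>n. \<integral>\<omega>. W n \<omega> * f (V n \<omega>) \<partial>M) \<longlonglongrightarrow> (\<integral>\<omega>. p \<omega> * f (V0 \<omega>) \<partial>M)"
proof (rule LIMSEQ_subsubseq)
  fix r :: "nat \<Rightarrow> nat"
  assume "strict_mono r"
  have [measurable]: "p \<in> borel_measurable M" "W n \<in> borel_measurable M" for n
    using W_int p_int by auto
  obtain s where "strict_mono s" and V_lim: "AE \<omega> in M. (\<lambda>n. V (r (s n)) \<omega>) \<longlonglongrightarrow> V0 \<omega>"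
    using conv_in_prob_AE_subseq[OF \<open>finite_measure M\<close> _ _ conv_in_prob_subseq[OF V_conv \<open>strict_mono r\<close>]]
    by auto
  then have "strict_mono (r \<circ> s)"
    using \<open>strict_mono r\<close> strict_mono_o by blast
  then obtain t where "strict_mono t" and W_lim: "AE \<omega> in M. (\<lambda>n. W (r (s (t n))) \<omega>) \<longlonglongrightarrow> p \<omega>"
    using conv_in_prob_AE_subseq[OF \<open>finite_measure M\<close> _ _ conv_in_prob_subseq[OF W_conv]]
    by (auto simp: o_def)
  have V_lim': "AE \<omega> in M. (\<lambda>n. V (r (s (t n))) \<omega>) \<longlonglongrightarrow> V0 \<omega>"
    using V_lim
  proof eventually_elim
    case (elim \<omega>)
    show ?case
      using LIMSEQ_subseq_LIMSEQ[OF elim \<open>strict_mono t\<close>] by (simp add: o_def)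
  qed
  have "(\<lambda>n. \<integral>\<omega>. \<bar>W (r (s (t n))) \<omega> - p \<omega>\<bar> \<partial>M) \<longlonglongrightarrow> 0"
    by (rule Scheffe_L1[OF W_int p_int _ W_integral W_lim]) (simp add: W_nonneg)
  then have "(\<lambda>n. \<integral>\<omega>. W (r (s (t n))) \<omega> * f (V (r (s (t n))) \<omega>) \<partial>M) \<longlonglongrightarrow> (\<integral>\<omega>. p \<omega> * f (V0 \<omega>) \<partial>M)"
    by (rule integral_tendsto_of_L1_and_AE[OF W_int p_int _ _ _ V_lim' f_cont f_bound]) simp_all
  moreover have "strict_mono (s \<circ> t)"
    using \<open>strict_mono s\<close> \<open>strict_mono t\<close> strict_mono_o by blast
  ultimately show "\<exists>s. strict_mono s \<and> (\<lambda>n. \<integral>\<omega>. W (r (s n)) \<omega> * f (V (r (s n)) \<omega>) \<partial>M) \<longlonglongrightarrow> (\<integral>\<omega>. p \<omega> * f (V0 \<omega>) \<partial>M)"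
    by (auto simp: o_def)
qed

lemma integral_density_distr:
  assumes [measurable]: "Y \<in> M \<rightarrow>\<^sub>M S" "\<rho> \<in> borel_measurable S" "f \<in> borel_measurable S"
    and "AE \<omega> in M. \<rho> (Y \<omega>) \<ge> 0"
  shows "integral\<^sup>L (density (distr M S Y) (\<lambda>y. ennreal (\<rho> y))) f = (\<integral>\<omega>. \<rho> (Y \<omega>) * f (Y \<omega>) \<partial>M)"
proof -
  have "AE y in distr M S Y. \<rho> y \<ge> 0"
    using assms(4) by (subst AE_distr_iff) auto
  then have "integral\<^sup>L (density (distr M S Y) (\<lambda>y. ennreal (\<rho> y))) f = (\<integral>y. \<rho> y * f y \<partial>distr M S Y)"
    by (subst integral_density) auto
  also have "\<dots> = (\<integral>\<omega>. \<rho> (Y \<omega>) * f (Y \<omega>) \<partial>M)"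
    by (rule integral_distr) auto
  finally show ?thesis .
qed

lemma integral_comp_prob_density:
  assumes [measurable]: "Y \<in> M \<rightarrow>\<^sub>M S" "\<rho> \<in> borel_measurable S"
    and \<rho>_nonneg: "\<And>y. \<rho> y \<ge> 0"
    and "prob_space (density (distr M S Y) (\<lambda>y. ennreal (\<rho> y)))"
  shows "integrable M (\<lambda>\<omega>. \<rho> (Y \<omega>))" "(\<integral>\<omega>. \<rho> (Y \<omega>) \<partial>M) = 1"
proof -
  have "(\<integral>\<^sup>+\<omega>. ennreal (\<rho> (Y \<omega>)) \<partial>M) = (\<integral>\<^sup>+y. ennreal (\<rho> y) \<partial>distr M S Y)"
    by (simp add: nn_integral_distr)
  also have "\<dots> = emeasure (density (distr M S Y) (\<lambda>y. ennreal (\<rho> y))) (space S)"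
    by (subst emeasure_density) (auto intro!: nn_integral_cong)
  also have "\<dots> = 1"
    using prob_space.emeasure_space_1[OF assms(4)] by simp
  finally have nn: "(\<integral>\<^sup>+\<omega>. ennreal (\<rho> (Y \<omega>)) \<partial>M) = 1" .
  then show "integrable M (\<lambda>\<omega>. \<rho> (Y \<omega>))"
    using \<rho>_nonneg by (intro integrableI_nonneg) auto
  show "(\<integral>\<omega>. \<rho> (Y \<omega>) \<partial>M) = 1"
    using nn \<rho>_nonneg by (subst integral_eq_nn_integral) auto
qed

lemma (in prob_space) sigma_finite_subalgebra_vimage:
  assumes "Y \<in> M \<rightarrow>\<^sub>M S"
  shows "sigma_finite_subalgebra M (vimage_algebra (space M) Y S)"
proof (rule finite_measure_subalgebra_is_sigma_finite)
  have "Y \<in> space M \<rightarrow> space S"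
    using measurable_space[OF assms] by blast
  then have "sets (vimage_algebra (space M) Y S) \<subseteq> sets M"
    using measurable_sets[OF assms] by (auto simp: sets_vimage_algebra2)
  then show "finite_measure_subalgebra M (vimage_algebra (space M) Y S)"
    unfolding finite_measure_subalgebra_def finite_measure_subalgebra_axioms_def subalgebra_def
    by (auto intro: finite_measure_axioms)
qed

lemma (in prob_space) integral_density_cond_exp:
  assumes [measurable]: "Y \<in> M \<rightarrow>\<^sub>M S" "g \<in> borel_measurable S" "f \<in> borel_measurable S"
    and p_int: "integrable M p" and p_nonneg: "AE \<omega> in M. p \<omega> \<ge> 0"
    and g_cond_exp: "AE \<omega> in M. real_cond_exp M (vimage_algebra (space M) Y S) p \<omega> = g (Y \<omega>)"
    and f_bound: "\<And>y. \<bar>f y\<bar> \<le> B"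
  shows "integral\<^sup>L (density (distr M S Y) (\<lambda>y. ennreal (g y))) f = (\<integral>\<omega>. p \<omega> * f (Y \<omega>) \<partial>M)"
proof -
  interpret sigma_finite_subalgebra M "vimage_algebra (space M) Y S"
    using assms(1) by (rule sigma_finite_subalgebra_vimage)
  have [measurable]: "p \<in> borel_measurable M"
    using p_int by simp
  have f_Y: "(\<lambda>\<omega>. f (Y \<omega>)) \<in> borel_measurable (vimage_algebra (space M) Y S)"
    by (rule measurable_compose[OF measurable_vimage_algebra1 assms(3)]) (use measurable_space[OF assms(1)] in auto)
  have "AE \<omega> in M. g (Y \<omega>) \<ge> 0"
    using real_cond_exp_pos[OF p_nonneg] g_cond_exp by auto
  then have "integral\<^sup>L (density (distr M S Y) (\<lambda>y. ennreal (g y))) f = (\<integral>\<omega>. f (Y \<omega>) * g (Y \<omega>) \<partial>M)"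
    by (simp add: integral_density_distr mult.commute)
  also have "\<dots> = (\<integral>\<omega>. f (Y \<omega>) * real_cond_exp M (vimage_algebra (space M) Y S) p \<omega> \<partial>M)"
    using g_cond_exp by (intro integral_cong_AE) auto
  also have "\<dots> = (\<integral>\<omega>. f (Y \<omega>) * p \<omega> \<partial>M)"
    using integrable_mult_bounded[OF p_int, of "\<lambda>\<omega>. f (Y \<omega>)" B] f_bound
    by (intro real_cond_exp_intg(2) f_Y) (auto simp: mult.commute)
  finally show ?thesis
    by (simp add: mult.commute)
qed

lemma weak_conv_measures_imp_Suc:
  assumes "weak_conv_measures (\<lambda>n. \<mu> (Suc n)) \<nu>"
  shows "weak_conv_measures \<mu> \<nu>"
  unfolding weak_conv_measures_def
proof (intro allI impI)
  fix f :: "'a \<Rightarrow> real"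
  assume "continuous_on UNIV f \<and> bounded (range f)"
  with assms have "(\<lambda>n. integral\<^sup>L (\<mu> (Suc n)) f) \<longlonglongrightarrow> integral\<^sup>L \<nu> f"
    unfolding weak_conv_measures_def by blast
  then show "(\<lambda>n. integral\<^sup>L (\<mu> n) f) \<longlonglongrightarrow> integral\<^sup>L \<nu> f"
    by (rule LIMSEQ_imp_Suc)
qed

lemma (in prob_space) weak_conv_density_comp:
  fixes Y :: "nat \<Rightarrow> 'a \<Rightarrow> 'e::{metric_space, second_countable_topology}"
  assumes Y_meas [measurable]: "\<And>n. Y n \<in> M \<rightarrow>\<^sub>M borel" and Y0_meas [measurable]: "Y0 \<in> M \<rightarrow>\<^sub>M borel"
    and Y_conv: "conv_in_prob M Y Y0"
    and \<rho>_meas [measurable]: "\<And>n. \<rho> n \<in> borel_measurable borel" and \<rho>_nonneg: "\<And>n y. \<rho> n y \<ge> 0"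
    and law: "\<And>n. prob_space (density (distr M borel (Y n)) (\<lambda>y. ennreal (\<rho> n y)))"
    and p_conv: "conv_in_prob M (\<lambda>n \<omega>. \<rho> n (Y n \<omega>)) p"
    and p_int: "integrable M p" and p_exp: "expectation p = 1"
    and g_meas: "g \<in> borel_measurable borel"
    and g_cond_exp: "AE \<omega> in M. real_cond_exp M (vimage_algebra (space M) Y0 borel) p \<omega> = g (Y0 \<omega>)"
  shows "weak_conv_measures (\<lambda>n. density (distr M borel (Y n)) (\<lambda>y. ennreal (\<rho> n y)))
           (density (distr M borel Y0) (\<lambda>y. ennreal (g y)))"
  unfolding weak_conv_measures_def
proof (intro allI impI, elim conjE)
  fix f :: "'e \<Rightarrow> real"
  assume f_cont: "continuous_on UNIV f" and "bounded (range f)"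
  then obtain B where f_bound: "\<And>x. \<bar>f x\<bar> \<le> B"
    unfolding bounded_iff by auto
  have f_meas: "f \<in> borel_measurable borel"
    using f_cont by (rule borel_measurable_continuous_onI)
  define W where "W = (\<lambda>n \<omega>. \<rho> n (Y n \<omega>))"
  have W_meas: "W n \<in> borel_measurable M" and W_nonneg: "W n \<omega> \<ge> 0" for n \<omega>
    unfolding W_def by (measurable, rule \<rho>_nonneg)
  have W_int: "integrable M (W n)" and W_integral: "integral\<^sup>L M (W n) = integral\<^sup>L M p" for n
    unfolding W_def p_exp using integral_comp_prob_density[OF Y_meas \<rho>_meas \<rho>_nonneg law] by blast+
  have p_nonneg: "AE \<omega> in M. p \<omega> \<ge> 0"
    using conv_in_prob_nonneg_limit[OF finite_measure_axioms W_meas _ W_nonneg] p_conv p_int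
    unfolding W_def by simp
  have "(\<lambda>n. \<integral>\<omega>. W n \<omega> * f (Y n \<omega>) \<partial>M) \<longlonglongrightarrow> (\<integral>\<omega>. p \<omega> * f (Y0 \<omega>) \<partial>M)"
    using p_conv unfolding W_def[symmetric]
    by (rule integral_tendsto_of_conv_in_prob[OF finite_measure_axioms W_int p_int W_nonneg W_integral _
          Y_meas Y0_meas Y_conv f_cont f_bound])
  moreover have "integral\<^sup>L (density (distr M borel (Y n)) (\<lambda>y. ennreal (\<rho> n y))) f
      = (\<integral>\<omega>. W n \<omega> * f (Y n \<omega>) \<partial>M)" for n
    unfolding W_def by (rule integral_density_distr[OF Y_meas \<rho>_meas f_meas AE_I2[OF \<rho>_nonneg]])
  moreover have "integral\<^sup>L (density (distr M borel Y0) (\<lambda>y. ennreal (g y))) f = (\<integral>\<omega>. p \<omega> * f (Y0 \<omega>) \<partial>M)"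
    by (rule integral_density_cond_exp[OF Y0_meas g_meas f_meas p_int p_nonneg g_cond_exp f_bound])
  ultimately show "(\<lambda>n. integral\<^sup>L (density (distr M borel (Y n)) (\<lambda>y. ennreal (\<rho> n y))) f)
      \<longlonglongrightarrow> integral\<^sup>L (density (distr M borel Y0) (\<lambda>y. ennreal (g y))) f"
    by (simp only:)
qed

theorem lemma1:
  fixes M :: "'b measure" and Y :: "nat \<Rightarrow> 'b \<Rightarrow> 'a::polish_space"
    and N :: "nat \<Rightarrow> 'c measure" and X :: "nat \<Rightarrow> 'c \<Rightarrow> 'a"
    and \<rho> :: "nat \<Rightarrow> 'a \<Rightarrow> real" and p :: "'b \<Rightarrow> real"
  assumes M: "prob_space M"
    and Y_meas: "\<And>n. Y n \<in> M \<rightarrow>\<^sub>M borel"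
    and N: "\<And>n. n \<ge> 1 \<Longrightarrow> prob_space (N n)"
    and X_meas: "\<And>n. n \<ge> 1 \<Longrightarrow> X n \<in> N n \<rightarrow>\<^sub>M borel"
    and Y_conv: "conv_in_prob M Y (Y 0)"
    and abs_cont: "\<And>n. n \<ge> 1 \<Longrightarrow> absolutely_continuous (distr M borel (Y n)) (distr (N n) borel (X n))"
    and \<rho>_meas: "\<And>n. n \<ge> 1 \<Longrightarrow> \<rho> n \<in> borel_measurable borel"
    and \<rho>_nonneg: "\<And>n x. n \<ge> 1 \<Longrightarrow> \<rho> n x \<ge> 0"
    and \<rho>_density: "\<And>n. n \<ge> 1 \<Longrightarrow>
          distr (N n) borel (X n) = density (distr M borel (Y n)) (\<lambda>x. ennreal (\<rho> n x))"
    and p_meas: "p \<in> borel_measurable M"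
    and p_conv: "conv_in_prob M (\<lambda>n \<omega>. \<rho> n (Y n \<omega>)) p"
    and p_int: "integrable M p"
    and p_exp: "prob_space.expectation M p = 1"
  shows "\<forall>g \<in> borel_measurable borel.
           (AE \<omega> in M. real_cond_exp M (vimage_algebra (space M) (Y 0) borel) p \<omega> = g (Y 0 \<omega>)) \<longrightarrow>
           weak_conv_measures (\<lambda>n. distr (N n) borel (X n))
             (density (distr M borel (Y 0)) (\<lambda>y. ennreal (g y)))"
proof (intro ballI impI)
  fix g :: "'a \<Rightarrow> real"
  assume g_meas: "g \<in> borel_measurable borel"
    and g_cond_exp: "AE \<omega> in M. real_cond_exp M (vimage_algebra (space M) (Y 0) borel) p \<omega> = g (Y 0 \<omega>)"
  interpret prob_space M
    by (rule M)
  \<comment> \<open>The hypotheses on \<open>X\<close>, \<open>N\<close>, \<open>\<rho>\<close> only hold for \<open>n \<ge> 1\<close>, so we work with the shifted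
    sequence.\<close>
  have law_Suc: "distr (N (Suc n)) borel (X (Suc n)) = density (distr M borel (Y (Suc n))) (\<lambda>y. ennreal (\<rho> (Suc n) y))" for n
    by (rule \<rho>_density) simp
  have "strict_mono Suc"
    by (rule strict_monoI) simp
  have "weak_conv_measures (\<lambda>n. distr (N (Suc n)) borel (X (Suc n))) (density (distr M borel (Y 0)) (\<lambda>y. ennreal (g y)))"
    unfolding law_Suc
  proof (rule weak_conv_density_comp)
    show "prob_space (density (distr M borel (Y (Suc n))) (\<lambda>y. ennreal (\<rho> (Suc n) y)))" for n
      unfolding law_Suc[symmetric] by (rule prob_space.prob_space_distr[OF N X_meas]) simp_all
  qed (use Y_meas \<rho>_meas \<rho>_nonneg conv_in_prob_subseq[OF Y_conv \<open>strict_mono Suc\<close>]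
         conv_in_prob_subseq[OF p_conv \<open>strict_mono Suc\<close>] p_int p_exp g_meas g_cond_exp
         in simp_all)
  then show "weak_conv_measures (\<lambda>n. distr (N n) borel (X n)) (density (distr M borel (Y 0)) (\<lambda>y. ennreal (g y)))"
    by (rule weak_conv_measures_imp_Suc)
qed

end
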